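(* Let $\Sigma=(\mathbb{N}_0,X,U,\mathscr{U},\phi)$ be a control system as in the standing setup and let $Q\subset X$ be a nonempty compact set. Then $Q$ is finitely equi-invariant in the mean if and only if $Q$ has bounded invariance complexity in the mean.
   Context: Standing setup: $(X,d)$ is a metric space, $U$ is a compact metric space, and $F:X\times U\to X$ is a map such that $F_u:=F(\cdot,u)$ is continuous for every $u\in U$. Let $\mathscr U=U^{\mathbb N_0}$ with the product topology. For $\omega=(\omega_0,\omega_1,\dots)\in\mathscr U$, $x\in X$, set $\phi(0,x,\omega)=x$ and $\phi(k,x,\omega)=F_{\omega_{k-1}}\circ\cdots\circ F_{\omega_0}(x)$ for $k\ge1$. It is assumed that $\phi:\mathbb N_0\times X\times\mathscr U\to X$ is continuous. Notation: $\mathbb N=\{1,2,\dots\}$; $B(x,\delta)$ is the open ball; $d(y,Q)=\inf_{q\in Q}d(y,q)$. Finite equi-invariance in the mean: a point $x\in Q$ is a finitely equi-invariant point in the mean of $Q$ if for every $\varepsilon>0$ there exist $\delta>0$ and a finite set $F\subset\mathscr U$ such that for every $y\in B(x,\delta)\cap Q$ there is $\omega\in F$ with $\frac1n\sum_{i=0}^{n-1}d(\phi(i,y,\omega),Q)<\varepsilon$ for all $n\in\mathbb N$. $Q$ is finitely equi-invariant in the mean if every point of $Q$ is such a point. Invariance complexity in the mean: for $\omega\in\mathscr U$, $n\in\mathbb N$, $\varepsilon>0$ let $\hat Q^\varepsilon_{n,\omega}=\{x\in Q:\max_{1\le k\le n}\frac1k\sum_{i=0}^{k-1}d(\phi(i,x,\omega),Q)<\varepsilon\}$.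 A set $F\subset\mathscr U$ is $(n,\varepsilon,Q)$-spanning in the mean if $Q=\bigcup_{\omega\in F}\hat Q^\varepsilon_{n,\omega}$, and $\hat r_{inv}(n,\varepsilon,Q)$ is the minimal cardinality of such a set ($=\infty$ if none exists). $Q$ has bounded invariance complexity in the mean if for every $\varepsilon>0$ there is $C>0$ with $\hat r_{inv}(n,\varepsilon,Q)\le C$ for all $n\in\mathbb N$. *)

theory Defs
  imports "HOL-Analysis.Analysis"
begin

(* The control range U is a compact subset of a metric type 'u; the state space X is the
   whole metric type 'x.  Controls are sequences nat \<Rightarrow> 'u with values in U, carrying the
   product topology (Function_Topology instance on nat \<Rightarrow> 'u). *)

definition ctrl :: "'u set \<Rightarrow> (nat \<Rightarrow> 'u) set" where
  "ctrl U = {\<omega>. \<forall>i. \<omega> i \<in> U}"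

primrec phi :: "('x \<Rightarrow> 'u \<Rightarrow> 'x) \<Rightarrow> nat \<Rightarrow> 'x \<Rightarrow> (nat \<Rightarrow> 'u) \<Rightarrow> 'x" where
  "phi F 0 x \<omega> = x"
| "phi F (Suc k) x \<omega> = F (phi F k x \<omega>) (\<omega> k)"

definition avg_dist ::
  "('x::metric_space \<Rightarrow> 'u \<Rightarrow> 'x) \<Rightarrow> 'x set \<Rightarrow> nat \<Rightarrow> 'x \<Rightarrow> (nat \<Rightarrow> 'u) \<Rightarrow> real" where
  "avg_dist F Q n y \<omega> = (1 / real n) * (\<Sum>i<n. infdist (phi F i y \<omega>) Q)"

definition fin_equi_inv_mean_point ::
  "('x::metric_space \<Rightarrow> 'u \<Rightarrow> 'x) \<Rightarrow> 'u set \<Rightarrow> 'x set \<Rightarrow> 'x \<Rightarrow> bool" where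
  "fin_equi_inv_mean_point F U Q x \<longleftrightarrow> x \<in> Q \<and>
     (\<forall>\<epsilon>>0. \<exists>\<delta>>0. \<exists>S. finite S \<and> S \<subseteq> ctrl U \<and>
        (\<forall>y \<in> ball x \<delta> \<inter> Q. \<exists>\<omega>\<in>S. \<forall>n\<ge>1. avg_dist F Q n y \<omega> < \<epsilon>))"

definition fin_equi_inv_mean ::
  "('x::metric_space \<Rightarrow> 'u \<Rightarrow> 'x) \<Rightarrow> 'u set \<Rightarrow> 'x set \<Rightarrow> bool" where
  "fin_equi_inv_mean F U Q \<longleftrightarrow> (\<forall>x\<in>Q. fin_equi_inv_mean_point F U Q x)"

definition Qhat ::
  "('x::metric_space \<Rightarrow> 'u \<Rightarrow> 'x) \<Rightarrow> 'x set \<Rightarrow> nat \<Rightarrow> real \<Rightarrow> (nat \<Rightarrow> 'u) \<Rightarrow> 'x set" where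
  "Qhat F Q n \<epsilon> \<omega> = {x \<in> Q. Max ((\<lambda>k. avg_dist F Q k x \<omega>) ` {1..n}) < \<epsilon>}"

definition spanning_mean ::
  "('x::metric_space \<Rightarrow> 'u \<Rightarrow> 'x) \<Rightarrow> 'u set \<Rightarrow> nat \<Rightarrow> real \<Rightarrow> 'x set \<Rightarrow> (nat \<Rightarrow> 'u) set \<Rightarrow> bool" where
  "spanning_mean F U n \<epsilon> Q S \<longleftrightarrow> S \<subseteq> ctrl U \<and> Q = (\<Union>\<omega>\<in>S. Qhat F Q n \<epsilon> \<omega>)"

definition r_inv_mean ::
  "('x::metric_space \<Rightarrow> 'u \<Rightarrow> 'x) \<Rightarrow> 'u set \<Rightarrow> nat \<Rightarrow> real \<Rightarrow> 'x set \<Rightarrow> ereal" where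
  "r_inv_mean F U n \<epsilon> Q =
     (INF S \<in> {S. spanning_mean F U n \<epsilon> Q S}. if finite S then ereal (real (card S)) else \<infinity>)"

definition bounded_inv_complexity_mean ::
  "('x::metric_space \<Rightarrow> 'u \<Rightarrow> 'x) \<Rightarrow> 'u set \<Rightarrow> 'x set \<Rightarrow> bool" where
  "bounded_inv_complexity_mean F U Q \<longleftrightarrow>
     (\<forall>\<epsilon>>0. \<exists>C>0. \<forall>n\<ge>1. r_inv_mean F U n \<epsilon> Q \<le> ereal C)"

end

theory Submission imports Defs begin

text \<open>Both conditions are equivalent to the existence, for each \<open>\<epsilon>\<close>, of a single finite set
  of controls keeping every point of \<open>Q\<close> \<open>\<epsilon>\<close>-close to \<open>Q\<close> in the mean for all times.
  Equi-invariance gives such a set by compactness of \<open>Q\<close>, and such a set spans at every time.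
  Conversely, bounded complexity yields for every time \<open>m\<close> a spanning family of at most \<open>N\<close>
  controls; by compactness of the control space a subsequence of these families converges,
  and since each mean \<open>avg_dist F Q k y\<close> depends continuously on the control, every point
  follows one of the \<open>N\<close> limit controls at all times.\<close>

definition fin_uniform_inv_mean ::
  "('x::metric_space \<Rightarrow> 'u \<Rightarrow> 'x) \<Rightarrow> 'u set \<Rightarrow> 'x set \<Rightarrow> bool" where
  "fin_uniform_inv_mean F U Q \<longleftrightarrow>
     (\<forall>\<epsilon>>0. \<exists>S. finite S \<and> S \<subseteq> ctrl U \<and>
        (\<forall>y\<in>Q. \<exists>\<omega>\<in>S. \<forall>n\<ge>1. avg_dist F Q n y \<omega> < \<epsilon>))"

lemma tendsto_le_if_frequently:
  fixes f :: "'a \<Rightarrow> 'b::linorder_topology"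
  assumes "(f \<longlongrightarrow> L) F" and "\<exists>\<^sub>F x in F. f x \<le> c"
  shows "L \<le> c"
proof (rule ccontr)
  assume "\<not> L \<le> c"
  then have "\<forall>\<^sub>F x in F. c < f x"
    using assms(1) by (intro order_tendstoD(1)) auto
  then have "\<forall>\<^sub>F x in F. \<not> f x \<le> c"
    by (rule eventually_mono) auto
  with assms(2) show False by (simp add: frequently_def)
qed

lemma finite_set_eq_image_lessThan:
  assumes "finite S" "S \<noteq> {}" "card S \<le> N"
  obtains f where "range f = S" "f ` {..<N} = S"
proof -
  obtain h where h: "bij_betw h {0..<card S} S"
    using ex_bij_betw_nat_finite[OF assms(1)] by blast
  have pos: "card S > 0" using assms by auto
  define f where "f j = h (min j (card S - 1))" for j
  have onto: "f ` A = S" if "{..<card S} \<subseteq> A" for A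
  proof
    show "f ` A \<subseteq> S"
      using h pos unfolding f_def bij_betw_def by auto
    show "S \<subseteq> f ` A"
    proof
      fix s assume "s \<in> S"
      moreover have "S = h ` {0..<card S}"
        using h by (simp add: bij_betw_def)
      ultimately obtain j where "j < card S" "s = h j"
        by (metis atLeastLessThan_iff imageE)
      then show "s \<in> f ` A"
        using that unfolding f_def by (intro image_eqI[of _ _ j]) auto
    qed
  qed
  show ?thesis
    using that onto[of UNIV] onto[of "{..<N}"] assms(3) by auto
qed

lemma compact_finite_witnesses_if_locally:
  assumes "compact K"
    and local: "\<forall>x\<in>K. \<exists>\<delta>>0. \<exists>S. finite S \<and> S \<subseteq> A \<and> (\<forall>y \<in> ball x \<delta> \<inter> K. \<exists>a\<in>S. P y a)"
  shows "\<exists>S. finite S \<and> S \<subseteq> A \<and> (\<forall>y\<in>K. \<exists>a\<in>S. P y a)"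
proof -
  from bchoice[OF local] obtain \<delta> where \<delta>: "\<forall>x\<in>K. \<delta> x > 0 \<and>
      (\<exists>S. finite S \<and> S \<subseteq> A \<and> (\<forall>y \<in> ball x (\<delta> x) \<inter> K. \<exists>a\<in>S. P y a))"
    by blast
  then have "\<forall>x\<in>K. \<exists>S. finite S \<and> S \<subseteq> A \<and> (\<forall>y \<in> ball x (\<delta> x) \<inter> K. \<exists>a\<in>S. P y a)"
    by blast
  from bchoice[OF this] obtain SS where SS: "\<forall>x\<in>K. finite (SS x) \<and> SS x \<subseteq> A \<and>
      (\<forall>y \<in> ball x (\<delta> x) \<inter> K. \<exists>a\<in>SS x. P y a)"
    by blast
  have "K \<subseteq> (\<Union>x\<in>K. ball x (\<delta> x))"
    using \<delta> centre_in_ball by blast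
  then obtain D where D: "D \<subseteq> K" "finite D" "K \<subseteq> (\<Union>x\<in>D. ball x (\<delta> x))"
    using compactE_image[OF assms(1), of K "\<lambda>x. ball x (\<delta> x)"] by blast
  have SS_fin: "finite (SS x)" and SS_sub: "SS x \<subseteq> A"
    and SS_cov: "\<forall>y \<in> ball x (\<delta> x) \<inter> K. \<exists>a\<in>SS x. P y a" if "x \<in> D" for x
    using bspec[OF SS subsetD[OF D(1) that]] by simp_all
  show ?thesis
  proof (intro exI[of _ "\<Union>x\<in>D. SS x"] conjI ballI)
    show "finite (\<Union>x\<in>D. SS x)" and "(\<Union>x\<in>D. SS x) \<subseteq> A"
      using finite_UN_I[OF D(2)] SS_fin SS_sub by blast+
    fix y assume "y \<in> K"
    with D obtain x where "x \<in> D" "y \<in> ball x (\<delta> x)"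
      by blast
    with \<open>y \<in> K\<close> SS_cov obtain a where "a \<in> SS x" "P y a"
      by blast
    with \<open>x \<in> D\<close> show "\<exists>a\<in>(\<Union>x\<in>D. SS x). P y a"
      by blast
  qed
qed

lemma compact_ctrl:
  fixes U :: "'u::topological_space set"
  assumes "compact U"
  shows "compact (ctrl U)"
proof -
  have "ctrl U = PiE UNIV (\<lambda>_. U)"
    by (auto simp: ctrl_def PiE_def extensional_def)
  moreover have "compactin (product_topology (\<lambda>_. euclidean) UNIV) (PiE UNIV (\<lambda>_. U))"
    using assms by (simp add: compactin_PiE)
  ultimately show ?thesis by (simp add: euclidean_product_topology)
qed

lemma subseq_tendsto_ctrl_families:
  fixes U :: "'u::metric_space set" and W :: "nat \<Rightarrow> nat \<Rightarrow> nat \<Rightarrow> 'u"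
  assumes "compact U" and "\<And>m j. W m j \<in> ctrl U"
  obtains \<Omega> r where "\<And>j. \<Omega> j \<in> ctrl U" "strict_mono r" "\<And>j. (\<lambda>m. W (r m) j) \<longlonglongrightarrow> \<Omega> j"
proof -
  have "\<forall>m. W m \<in> ctrl (ctrl U)"
    using assms(2) unfolding ctrl_def by blast
  with compact_imp_seq_compact[OF compact_ctrl[OF compact_ctrl[OF assms(1)]]]
  obtain \<Omega> r where \<Omega>: "\<Omega> \<in> ctrl (ctrl U)" and r: "strict_mono r"
    and lim: "(W \<circ> r) \<longlonglongrightarrow> \<Omega>"
    by (rule seq_compactE)
  have "(\<lambda>m. W (r m) j) \<longlonglongrightarrow> \<Omega> j" for j
    using continuous_on_tendsto_compose[OF continuous_on_product_coordinates lim]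
    by (simp add: o_def)
  moreover have "\<Omega> j \<in> ctrl U" for j
    using \<Omega> by (simp add: ctrl_def)
  ultimately show ?thesis
    using that r by blast
qed

lemma continuous_on_avg_dist:
  assumes "\<forall>k. continuous_on (UNIV \<times> ctrl U) (\<lambda>(x, \<omega>). phi F k x \<omega>)"
  shows "continuous_on (ctrl U) (avg_dist F Q n y)"
proof -
  have "continuous_on (ctrl U) (\<lambda>\<omega>. (y, \<omega>))" and "Pair y ` ctrl U \<subseteq> UNIV \<times> ctrl U"
    by (auto intro: continuous_intros)
  from continuous_on_compose2[OF assms[rule_format] this]
  have "continuous_on (ctrl U) (\<lambda>\<omega>. phi F i y \<omega>)" for i
    by simp
  then show ?thesis
    unfolding avg_dist_def by (intro continuous_intros)
qed

lemma mem_Qhat_iff: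
  assumes "n \<ge> 1"
  shows "x \<in> Qhat F Q n \<epsilon> \<omega> \<longleftrightarrow> x \<in> Q \<and> (\<forall>k\<in>{1..n}. avg_dist F Q k x \<omega> < \<epsilon>)"
  using assms by (auto simp: Qhat_def)

lemma avg_dist_less_if_mem_Qhat:
  assumes "x \<in> Qhat F Q n \<epsilon> \<omega>" and "1 \<le> k" and "k \<le> n"
  shows "avg_dist F Q k x \<omega> < \<epsilon>"
  using assms by (auto simp: mem_Qhat_iff)

lemma r_inv_mean_le_card:
  assumes "spanning_mean F U n \<epsilon> Q S" and "finite S"
  shows "r_inv_mean F U n \<epsilon> Q \<le> ereal (real (card S))"
  unfolding r_inv_mean_def using assms by (intro INF_lower2[of S]) auto

lemma spanning_mean_if_r_inv_mean_le:
  assumes "r_inv_mean F U n \<epsilon> Q \<le> ereal C"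
  obtains S where "spanning_mean F U n \<epsilon> Q S" "finite S" "real (card S) \<le> C"
proof -
  have "\<exists>S. spanning_mean F U n \<epsilon> Q S \<and> finite S \<and> real (card S) \<le> C"
  proof (rule ccontr)
    assume none: "\<nexists>S. spanning_mean F U n \<epsilon> Q S \<and> finite S \<and> real (card S) \<le> C"
    have "ereal (of_int \<lfloor>C\<rfloor> + 1) \<le> r_inv_mean F U n \<epsilon> Q"
      unfolding r_inv_mean_def
    proof (rule INF_greatest)
      fix S assume "S \<in> {S. spanning_mean F U n \<epsilon> Q S}"
      show "ereal (of_int \<lfloor>C\<rfloor> + 1) \<le> (if finite S then ereal (real (card S)) else \<infinity>)"
      proof (cases "finite S")
        case True
        with none \<open>S \<in> _\<close> have "C < real (card S)"
          by (simp add: not_le)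
        then have "\<lfloor>C\<rfloor> < int (card S)"
          by (simp add: floor_less_iff)
        with True show ?thesis by simp
      qed simp
    qed
    with assms have "of_int \<lfloor>C\<rfloor> + 1 \<le> C"
      using order_trans ereal_less_eq(3) by blast
    then show False by linarith
  qed
  with that show ?thesis by blast
qed

text \<open>In the limit the strict inequality of \<open>Qhat\<close> degenerates to \<open>\<le>\<close>.\<close>

lemma uniform_controls_if_spanning_families:
  fixes U :: "'u::metric_space set" and W :: "nat \<Rightarrow> nat \<Rightarrow> nat \<Rightarrow> 'u"
  assumes "compact U"
    and "\<forall>k. continuous_on (UNIV \<times> ctrl U) (\<lambda>(x, \<omega>). phi F k x \<omega>)"
    and W: "\<And>m j. W m j \<in> ctrl U"
    and cover: "\<And>m y. y \<in> Q \<Longrightarrow> \<exists>j<N. y \<in> Qhat F Q (Suc m) \<epsilon> (W m j)"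
  obtains S where "finite S" "S \<subseteq> ctrl U"
    "\<And>y. y \<in> Q \<Longrightarrow> \<exists>\<omega>\<in>S. \<forall>k\<ge>1. avg_dist F Q k y \<omega> \<le> \<epsilon>"
proof -
  obtain \<Omega> r where \<Omega>: "\<And>j. \<Omega> j \<in> ctrl U" and r: "strict_mono r"
    and lim: "\<And>j. (\<lambda>m. W (r m) j) \<longlonglongrightarrow> \<Omega> j"
    using subseq_tendsto_ctrl_families[of U W, OF assms(1) W] by blast
  have good: "\<exists>j<N. \<forall>k\<ge>1. avg_dist F Q k y (\<Omega> j) \<le> \<epsilon>" if y: "y \<in> Q" for y
  proof -
    have "\<forall>m. \<exists>j\<in>{..<N}. y \<in> Qhat F Q (Suc (r m)) \<epsilon> (W (r m) j)"
      using cover[OF y] by blast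
    then have "\<exists>\<^sub>F m in sequentially. \<exists>j\<in>{..<N}. y \<in> Qhat F Q (Suc (r m)) \<epsilon> (W (r m) j)"
      by (simp add: always_eventually eventually_frequently)
    from frequently_bex_finite[OF finite_lessThan this] obtain j where "j < N"
      and freq: "\<exists>\<^sub>F m in sequentially. y \<in> Qhat F Q (Suc (r m)) \<epsilon> (W (r m) j)"
      by blast
    have "avg_dist F Q k y (\<Omega> j) \<le> \<epsilon>" if "k \<ge> 1" for k
    proof (rule tendsto_le_if_frequently)
      show "(\<lambda>m. avg_dist F Q k y (W (r m) j)) \<longlonglongrightarrow> avg_dist F Q k y (\<Omega> j)"
        by (rule continuous_on_tendsto_compose[OF continuous_on_avg_dist[OF assms(2)] lim \<Omega>])
          (simp add: W)
      have "\<forall>\<^sub>F m in sequentially. k \<le> Suc (r m)"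
        using eventually_ge_at_top[of k]
        by (rule eventually_mono) (meson le_SucI order_trans seq_suble[OF r])
      then have "\<forall>\<^sub>F m in sequentially. y \<in> Qhat F Q (Suc (r m)) \<epsilon> (W (r m) j) \<longrightarrow>
          avg_dist F Q k y (W (r m) j) \<le> \<epsilon>"
        by (rule eventually_mono) (meson \<open>k \<ge> 1\<close> less_imp_le avg_dist_less_if_mem_Qhat)
      with freq show "\<exists>\<^sub>F m in sequentially. avg_dist F Q k y (W (r m) j) \<le> \<epsilon>"
        by (rule frequently_rev_mp)
    qed
    with \<open>j < N\<close> show ?thesis by blast
  qed
  show ?thesis
  proof (rule that[of "\<Omega> ` {..<N}"])
    show "\<Omega> ` {..<N} \<subseteq> ctrl U"
      using \<Omega> by blast
    show "\<exists>\<omega>\<in>\<Omega> ` {..<N}. \<forall>k\<ge>1. avg_dist F Q k y \<omega> \<le> \<epsilon>" if "y \<in> Q" for y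
      using good[OF that] by blast
  qed simp
qed

lemma fin_uniform_inv_mean_if_fin_equi_inv_mean:
  assumes "compact Q" and "fin_equi_inv_mean F U Q"
  shows "fin_uniform_inv_mean F U Q"
  unfolding fin_uniform_inv_mean_def
proof (intro allI impI)
  fix \<epsilon> :: real assume "\<epsilon> > 0"
  with assms(2) have "\<forall>x\<in>Q. \<exists>\<delta>>0. \<exists>S. finite S \<and> S \<subseteq> ctrl U \<and>
      (\<forall>y \<in> ball x \<delta> \<inter> Q. \<exists>\<omega>\<in>S. \<forall>n\<ge>1. avg_dist F Q n y \<omega> < \<epsilon>)"
    by (simp add: fin_equi_inv_mean_def fin_equi_inv_mean_point_def)
  with assms(1) show "\<exists>S. finite S \<and> S \<subseteq> ctrl U \<and>
      (\<forall>y\<in>Q. \<exists>\<omega>\<in>S. \<forall>n\<ge>1. avg_dist F Q n y \<omega> < \<epsilon>)"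
    by (rule compact_finite_witnesses_if_locally)
qed

lemma fin_equi_inv_mean_if_fin_uniform_inv_mean:
  assumes "fin_uniform_inv_mean F U Q"
  shows "fin_equi_inv_mean F U Q"
  unfolding fin_equi_inv_mean_def fin_equi_inv_mean_point_def
proof (intro ballI conjI allI impI)
  fix x and \<epsilon> :: real assume "\<epsilon> > 0"
  from assms[unfolded fin_uniform_inv_mean_def, rule_format, OF this]
  obtain S where "finite S" "S \<subseteq> ctrl U"
    and good: "\<forall>y\<in>Q. \<exists>\<omega>\<in>S. \<forall>n\<ge>1. avg_dist F Q n y \<omega> < \<epsilon>"
    by blast
  moreover have "\<forall>y \<in> ball x 1 \<inter> Q. \<exists>\<omega>\<in>S. \<forall>n\<ge>1. avg_dist F Q n y \<omega> < \<epsilon>"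
    using good by blast
  ultimately show "\<exists>\<delta>>0. \<exists>S. finite S \<and> S \<subseteq> ctrl U \<and>
      (\<forall>y \<in> ball x \<delta> \<inter> Q. \<exists>\<omega>\<in>S. \<forall>n\<ge>1. avg_dist F Q n y \<omega> < \<epsilon>)"
    using zero_less_one by blast
qed

lemma bounded_inv_complexity_mean_if_fin_uniform_inv_mean:
  assumes "fin_uniform_inv_mean F U Q"
  shows "bounded_inv_complexity_mean F U Q"
  unfolding bounded_inv_complexity_mean_def
proof (intro allI impI)
  fix \<epsilon> :: real assume "\<epsilon> > 0"
  from assms[unfolded fin_uniform_inv_mean_def, rule_format, OF this]
  obtain S where S: "finite S" "S \<subseteq> ctrl U"
    and good: "\<forall>y\<in>Q. \<exists>\<omega>\<in>S. \<forall>n\<ge>1. avg_dist F Q n y \<omega> < \<epsilon>"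
    by blast
  have "r_inv_mean F U n \<epsilon> Q \<le> ereal (real (card S) + 1)" if "n \<ge> 1" for n
  proof -
    have "Q \<subseteq> (\<Union>\<omega>\<in>S. Qhat F Q n \<epsilon> \<omega>)"
      using good that by (fastforce simp: mem_Qhat_iff)
    moreover have "Qhat F Q n \<epsilon> \<omega> \<subseteq> Q" for \<omega>
      unfolding Qhat_def by blast
    ultimately have "spanning_mean F U n \<epsilon> Q S"
      unfolding spanning_mean_def using S(2) by blast
    then have "r_inv_mean F U n \<epsilon> Q \<le> ereal (real (card S))"
      using S(1) by (rule r_inv_mean_le_card)
    then show ?thesis
      by (rule order_trans) simp
  qed
  then show "\<exists>C>0. \<forall>n\<ge>1. r_inv_mean F U n \<epsilon> Q \<le> ereal C"
    by (intro exI[of _ "real (card S) + 1"]) auto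
qed

lemma fin_uniform_inv_mean_if_bounded_inv_complexity_mean:
  fixes U :: "'u::metric_space set"
  assumes "compact U"
    and cont: "\<forall>k. continuous_on (UNIV \<times> ctrl U) (\<lambda>(x, \<omega>). phi F k x \<omega>)"
    and "Q \<noteq> {}" and bounded: "bounded_inv_complexity_mean F U Q"
  shows "fin_uniform_inv_mean F U Q"
  unfolding fin_uniform_inv_mean_def
proof (intro allI impI)
  fix \<epsilon> :: real assume "\<epsilon> > 0"
  then obtain C where C: "\<And>n. n \<ge> 1 \<Longrightarrow> r_inv_mean F U n (\<epsilon>/2) Q \<le> ereal C"
    using bounded[unfolded bounded_inv_complexity_mean_def, rule_format, of "\<epsilon>/2"] by auto
  define N where "N = nat \<lfloor>C\<rfloor>"
  have "\<forall>m. \<exists>W. (\<forall>j. W j \<in> ctrl U) \<and> (\<forall>y\<in>Q. \<exists>j<N. y \<in> Qhat F Q (Suc m) (\<epsilon>/2) (W j))"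
  proof
    fix m
    obtain S where S: "spanning_mean F U (Suc m) (\<epsilon>/2) Q S" "finite S" "real (card S) \<le> C"
      using spanning_mean_if_r_inv_mean_le[OF C[of "Suc m"]] by auto
    then have "S \<noteq> {}" and "card S \<le> N"
      using \<open>Q \<noteq> {}\<close> unfolding spanning_mean_def N_def by (auto simp: le_nat_floor)
    with S(2) obtain W where "range W = S" "W ` {..<N} = S"
      by (rule finite_set_eq_image_lessThan)
    have "W j \<in> ctrl U" for j
      using \<open>range W = S\<close> S(1) unfolding spanning_mean_def by blast
    moreover have "\<exists>j<N. y \<in> Qhat F Q (Suc m) (\<epsilon>/2) (W j)" if "y \<in> Q" for y
    proof -
      from that S(1) obtain \<omega> where "\<omega> \<in> S" "y \<in> Qhat F Q (Suc m) (\<epsilon>/2) \<omega>"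
        unfolding spanning_mean_def by blast
      with \<open>W ` {..<N} = S\<close> show ?thesis
        by (metis imageE lessThan_iff)
    qed
    ultimately show "\<exists>W. (\<forall>j. W j \<in> ctrl U) \<and> (\<forall>y\<in>Q. \<exists>j<N. y \<in> Qhat F Q (Suc m) (\<epsilon>/2) (W j))"
      by blast
  qed
  from choice[OF this] obtain W where
    W: "\<And>m j. W m j \<in> ctrl U" and
    cover: "\<And>m y. y \<in> Q \<Longrightarrow> \<exists>j<N. y \<in> Qhat F Q (Suc m) (\<epsilon>/2) (W m j)"
    by blast
  obtain S where "finite S" "S \<subseteq> ctrl U"
    and good: "\<And>y. y \<in> Q \<Longrightarrow> \<exists>\<omega>\<in>S. \<forall>k\<ge>1. avg_dist F Q k y \<omega> \<le> \<epsilon>/2"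
    using uniform_controls_if_spanning_families[of U F W Q N "\<epsilon>/2", OF assms(1) cont W cover]
    by blast
  have "\<exists>\<omega>\<in>S. \<forall>n\<ge>1. avg_dist F Q n y \<omega> < \<epsilon>" if "y \<in> Q" for y
  proof -
    from good[OF that] obtain \<omega> where "\<omega> \<in> S" "\<forall>k\<ge>1. avg_dist F Q k y \<omega> \<le> \<epsilon>/2"
      by blast
    moreover have "\<epsilon>/2 < \<epsilon>"
      using \<open>\<epsilon> > 0\<close> by simp
    ultimately show ?thesis
      by (meson order_le_less_trans)
  qed
  with \<open>finite S\<close> \<open>S \<subseteq> ctrl U\<close>
  show "\<exists>S. finite S \<and> S \<subseteq> ctrl U \<and> (\<forall>y\<in>Q. \<exists>\<omega>\<in>S. \<forall>n\<ge>1. avg_dist F Q n y \<omega> < \<epsilon>)"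
    by (intro exI[of _ S]) simp
qed

theorem mainTheorem2:
  fixes F :: "'x::metric_space \<Rightarrow> 'u::metric_space \<Rightarrow> 'x"
    and U :: "'u set" and Q :: "'x set"
  assumes "compact U"
    and "\<forall>u\<in>U. continuous_on UNIV (\<lambda>x. F x u)"
    and "\<forall>k. continuous_on (UNIV \<times> ctrl U) (\<lambda>(x, \<omega>). phi F k x \<omega>)"
    and "compact Q" and "Q \<noteq> {}"
  shows "fin_equi_inv_mean F U Q \<longleftrightarrow> bounded_inv_complexity_mean F U Q"
proof -
  have "fin_equi_inv_mean F U Q \<longleftrightarrow> fin_uniform_inv_mean F U Q"
    using fin_uniform_inv_mean_if_fin_equi_inv_mean[OF assms(4)]
      fin_equi_inv_mean_if_fin_uniform_inv_mean by blast
  also have "\<dots> \<longleftrightarrow> bounded_inv_complexity_mean F U Q"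
    using bounded_inv_complexity_mean_if_fin_uniform_inv_mean
      fin_uniform_inv_mean_if_bounded_inv_complexity_mean[OF assms(1,3,5)] by blast
  finally show ?thesis .
qed

end
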